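(* Let $m\geq 2$ be an integer and $n'=2^{m-1}$. Then the number of subgroups of the direct product $\mathbb{Z}_2\times Q_{4n'}$ is $$|L(\mathbb{Z}_2\times Q_{4n'})|=5\sigma(n')+3\tau(n')-2n'+2.$$
   Context: $L(G)$ denotes the set of all subgroups of a group $G$. $Q_{4n'}=\langle x,y\mid x^{2n'}=e,\ y^2=x^{n'},\ y^{-1}xy=x^{-1}\rangle$ is the generalized quaternion group of order $4n'$. For a positive integer $k$, $\tau(k)$ is the number of positive divisors of $k$ and $\sigma(k)$ is their sum. *)

theory Defs
  imports "HOL-Algebra.Algebra"
begin

text \<open>Concrete model of the generalized quaternion group
  Q_{4n} = < x, y | x^(2n) = e, y^2 = x^n, y^-1 x y = x^-1 >.
  The pair (i, j) with 0 <= i < 2n and j in {0,1} represents x^i y^j.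
  Multiplication: x^a y^b * x^c y^d = x^(a + (-1)^b c + b d n) y^((b+d) mod 2).\<close>

definition quaternion_group :: "nat \<Rightarrow> (nat \<times> nat) monoid" where
  "quaternion_group n =
     \<lparr>carrier = {0..<2*n} \<times> {0, 1},
      monoid.mult = (\<lambda>(a, b) (c, d).
         if b = 0 then ((a + c) mod (2*n), d)
         else if d = 0 then ((a + (2*n - c)) mod (2*n), 1)
         else ((a + (2*n - c) + n) mod (2*n), 0)),
      one = (0, 0)\<rparr>"

definition num_divisors :: "nat \<Rightarrow> nat" where
  "num_divisors k = card {d. d dvd k}"

definition sum_divisors :: "nat \<Rightarrow> nat" where
  "sum_divisors k = (\<Sum>d\<in>{d. d dvd k}. d)"

end

theory Submission
  imports Defs "HOL-Computational_Algebra.Group_Closure" "HOL-Computational_Algebra.Primes"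
begin

text \<open>
  Write the elements of \<open>\<int>\<^sub>2 \<times> Q\<^sub>4\<^sub>n\<close> as \<open>(e, x\<^sup>a y\<^sup>b)\<close>. A subgroup \<open>H\<close> is
  determined by three data: its intersection with \<open>\<langle>x\<rangle>\<close>, which is \<open>\<langle>x\<^sup>d\<rangle>\<close> for a
  divisor \<open>d\<close> of \<open>2n\<close>; its image \<open>L\<close> in the Klein four-group under \<open>(e, x\<^sup>a y\<^sup>b) \<mapsto> (e, b)\<close>;
  and offsets \<open>r, s\<close> modulo \<open>d\<close> such that \<open>(e, x\<^sup>a y\<^sup>b) \<in> H\<close> iff \<open>(e, b) \<in> L\<close> and
  \<open>a \<equiv> e r + b s (mod d)\<close>. Squaring \<open>(1, x\<^sup>r)\<close> and \<open>(e, x\<^sup>a y)\<close> shows \<open>d dvd 2r\<close>, and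
  \<open>d dvd n\<close> when \<open>L\<close> meets the coset of \<open>y\<close>; conversely all such data give subgroups, and
  normalised data give distinct ones. Counting the data gives
  \<open>\<Sum>\<^bsub>d | 2n\<^esub> 1 + t(d) + [d | n] (2 + t(d)) d\<close> with \<open>t(d) = #{r mod d. 2r \<equiv> 0}\<close>; for
  \<open>n = 2\<^sup>m\<^sup>-\<^sup>1\<close> this is \<open>2\<^sup>m\<^sup>+\<^sup>2 + 3m - 3\<close>, which is the stated expression because
  \<open>\<sigma>(n) = 2\<^sup>m - 1\<close> and \<open>\<tau>(n) = m\<close>.
\<close>

lemma nat_mod_add_nat_mod:
  fixes a c :: int
  assumes "n > 0"
  shows "(nat (a mod (2 * int n)) + nat (c mod (2 * int n))) mod (2 * n) = nat ((a + c) mod (2 * int n))"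
proof -
  have "int ((nat (a mod (2 * int n)) + nat (c mod (2 * int n))) mod (2 * n)) = (a + c) mod (2 * int n)"
    using assms by (simp add: zmod_int mod_add_eq)
  then show ?thesis by linarith
qed

lemma nat_mod_diff_nat_mod:
  fixes a c :: int
  assumes "n > 0"
  shows "(nat (a mod (2 * int n)) + (2 * n - nat (c mod (2 * int n))) + k) mod (2 * n)
       = nat ((a - c + int k) mod (2 * int n))"
proof -
  define x y where "x = nat (a mod (2 * int n))" and "y = nat (c mod (2 * int n))"
  have x: "int x = a mod (2 * int n)" and y: "int y = c mod (2 * int n)"
    using assms by (simp_all add: x_def y_def)
  have "c mod (2 * int n) < 2 * int n" using assms by simp
  then have "y \<le> 2 * n" using y by linarith
  then have "int ((x + (2 * n - y) + k) mod (2 * n)) = (int x - int y + int k + 2 * int n) mod (2 * int n)"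
    by (simp add: zmod_int algebra_simps)
  also have "\<dots> = ((a mod (2 * int n) - c mod (2 * int n)) mod (2 * int n) + int k) mod (2 * int n)"
    unfolding x y by (simp add: mod_add_left_eq)
  also have "\<dots> = (a - c + int k) mod (2 * int n)"
    by (simp add: mod_diff_eq mod_add_left_eq)
  finally show ?thesis unfolding x_def[symmetric] y_def[symmetric] by linarith
qed

lemma eq_if_int_dvd_diff:
  fixes x y d :: nat
  assumes "x < d" "y < d" "int d dvd int x - int y"
  shows "x = y"
proof -
  have "int x mod int d = int y mod int d" using assms(3) by (simp add: mod_eq_dvd_iff)
  then have "x mod d = y mod d" by (simp flip: zmod_int)
  with assms(1,2) show ?thesis by simp
qed

lemma int_set_closed_diff_eq_multiples:
  fixes I :: "int set"
  assumes "0 \<in> I" and diff: "\<And>a b. a \<in> I \<Longrightarrow> b \<in> I \<Longrightarrow> a - b \<in> I"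
  shows "I = {a. Gcd I dvd a}"
proof -
  have "group_closure I \<subseteq> I"
  proof
    fix a assume "a \<in> group_closure I"
    then show "a \<in> I"
      by induction (use assms in auto)
  qed
  then have "I = range (times (Gcd I))"
    using group_closure_eq[of I] by (auto intro: group_closure.base)
  then show ?thesis by (auto simp: dvd_def)
qed

section \<open>The group \<open>\<int>\<^sub>2 \<times> Q\<^sub>4\<^sub>n\<close>\<close>

definition Z2Q :: "nat \<Rightarrow> (int \<times> nat \<times> nat) monoid" where
  "Z2Q n = integer_mod_group 2 \<times>\<times> quaternion_group n"

text \<open>\<open>qelt n e a b\<close> is \<open>(e, x\<^sup>a y\<^sup>b)\<close>; the exponent \<open>a\<close> is any integer, read modulo \<open>2n\<close>.\<close>

definition qelt :: "nat \<Rightarrow> int \<Rightarrow> int \<Rightarrow> nat \<Rightarrow> int \<times> nat \<times> nat" where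
  "qelt n e a b = (e, nat (a mod (2 * int n)), b)"

lemma qelt_eq_iff:
  assumes "n > 0"
  shows "qelt n e a b = qelt n e' a' b' \<longleftrightarrow> e = e' \<and> a mod (2 * int n) = a' mod (2 * int n) \<and> b = b'"
  using assms by (simp add: qelt_def eq_nat_nat_iff)

lemma carrier_Z2Q:
  assumes "n > 0"
  shows "x \<in> carrier (Z2Q n) \<longleftrightarrow> (\<exists>e a b. x = qelt n e a b \<and> e \<in> {0,1} \<and> b \<in> {0,1})"
proof
  assume "x \<in> carrier (Z2Q n)"
  then obtain e a b where "x = (e, a, b)" "e \<in> {0..<2}" "a < 2 * n" "b \<in> {0,1}"
    by (auto simp: Z2Q_def DirProd_def quaternion_group_def carrier_integer_mod_group)
  moreover have "x = qelt n e (int a) b"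
    using \<open>a < 2 * n\<close> \<open>x = (e, a, b)\<close> by (simp add: qelt_def)
  ultimately show "\<exists>e a b. x = qelt n e a b \<and> e \<in> {0,1} \<and> b \<in> {0,1}" by force
next
  assume "\<exists>e a b. x = qelt n e a b \<and> e \<in> {0,1} \<and> b \<in> {0,1}"
  with assms show "x \<in> carrier (Z2Q n)"
    by (auto simp: Z2Q_def DirProd_def quaternion_group_def carrier_integer_mod_group
        qelt_def nat_less_iff)
qed

lemma one_Z2Q: "\<one>\<^bsub>Z2Q n\<^esub> = qelt n 0 0 0"
  by (simp add: Z2Q_def DirProd_def quaternion_group_def qelt_def)

lemma qelt_mult:
  assumes "n > 0" "b \<in> {0,1}" "b' \<in> {0,1}"
  shows "qelt n e a b \<otimes>\<^bsub>Z2Q n\<^esub> qelt n e' c b' =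
    qelt n ((e + e') mod 2) (a + (1 - 2 * int b) * c + int (b * b') * int n) ((b + b') mod 2)"
proof -
  from assms(2,3) consider "b = 0" | "b = 1" "b' = 0" | "b = 1" "b' = 1" by auto
  then show ?thesis
  proof cases
    case 1
    with assms show ?thesis
      by (auto simp: Z2Q_def DirProd_def quaternion_group_def qelt_def nat_mod_add_nat_mod)
  next
    case 2
    with assms show ?thesis
      using nat_mod_diff_nat_mod[of n a c 0]
      by (simp add: Z2Q_def DirProd_def quaternion_group_def qelt_def)
  next
    case 3
    with assms show ?thesis
      using nat_mod_diff_nat_mod[of n a c n]
      by (simp add: Z2Q_def DirProd_def quaternion_group_def qelt_def)
  qed
qed

lemma qelt_eq_one_iff:
  assumes "n > 0"
  shows "qelt n e a b = \<one>\<^bsub>Z2Q n\<^esub> \<longleftrightarrow> e = 0 \<and> 2 * int n dvd a \<and> b = 0"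
  using assms by (simp add: one_Z2Q qelt_eq_iff mod_eq_0_iff_dvd)

text \<open>\<open>Z2Q n\<close> is never shown to be a group: the inverse is read off the definition of
  \<open>m_inv\<close> by uniqueness.\<close>

lemma qelt_inv:
  assumes n: "n > 0" and e: "e \<in> {0,1}" and b: "b \<in> {0,1}"
  shows "inv\<^bsub>Z2Q n\<^esub> qelt n e a b = qelt n e ((2 * int b - 1) * a + int b * int n) b"
proof -
  define a' where "a' = (2 * int b - 1) * a + int b * int n"
  have ee: "(e + e) mod 2 = 0" and bb: "(b + b) mod 2 = 0" using e b by auto
  have in_carrier: "qelt n e a' b \<in> carrier (Z2Q n)"
    using n e b by (auto simp: carrier_Z2Q)
  have right: "qelt n e a b \<otimes>\<^bsub>Z2Q n\<^esub> qelt n e a' b = \<one>\<^bsub>Z2Q n\<^esub>"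
    and left: "qelt n e a' b \<otimes>\<^bsub>Z2Q n\<^esub> qelt n e a b = \<one>\<^bsub>Z2Q n\<^esub>"
    using b by (auto simp: qelt_mult[OF n] qelt_eq_one_iff[OF n] ee bb a'_def)
  have unique: "y = qelt n e a' b"
    if y_carrier: "y \<in> carrier (Z2Q n)"
      and y_inverse: "qelt n e a b \<otimes>\<^bsub>Z2Q n\<^esub> y = \<one>\<^bsub>Z2Q n\<^esub>" for y
  proof -
    obtain e' c b' where y: "y = qelt n e' c b'" "e' \<in> {0,1}" "b' \<in> {0,1}"
      using carrier_Z2Q[OF n, THEN iffD1, OF y_carrier] by blast
    have "qelt n ((e + e') mod 2) (a + (1 - 2 * int b) * c + int (b * b') * int n) ((b + b') mod 2)
        = \<one>\<^bsub>Z2Q n\<^esub>"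
      using y_inverse unfolding y(1) qelt_mult[OF n b y(3)] .
    then have "(e + e') mod 2 = 0" "(b + b') mod 2 = 0"
      and dvd: "2 * int n dvd a + (1 - 2 * int b) * c + int (b * b') * int n"
      unfolding qelt_eq_one_iff[OF n] by auto
    then have "e' = e" "b' = b"
      using e b y by auto
    have "c - a' = (1 - 2 * int b) * (a + (1 - 2 * int b) * c + int (b * b') * int n)"
      using b \<open>b' = b\<close> by (auto simp: a'_def algebra_simps)
    then have "2 * int n dvd c - a'"
      using dvd by simp
    then show ?thesis
      using n y \<open>e' = e\<close> \<open>b' = b\<close> by (simp add: qelt_eq_iff mod_eq_dvd_iff)
  qed
  show ?thesis
    unfolding m_inv_def a'_def[symmetric]
    using in_carrier right left unique by (intro the_equality) blast+
qed

lemma qelt_in_carrier_iff: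
  assumes "n > 0"
  shows "qelt n e a b \<in> carrier (Z2Q n) \<longleftrightarrow> e \<in> {0,1} \<and> b \<in> {0,1}"
  using assms by (auto simp: carrier_Z2Q qelt_eq_iff)

lemma qelt_mult_inv:
  assumes "n > 0" "e \<in> {0,1}" "b \<in> {0,1}"
  shows "qelt n e a b \<otimes>\<^bsub>Z2Q n\<^esub> inv\<^bsub>Z2Q n\<^esub> qelt n e c b = qelt n 0 (a - c) 0"
  using assms by (auto simp: qelt_inv qelt_mult algebra_simps)

lemma qelt_cyclic_mult:
  assumes "n > 0" "e \<in> {0,1}" "b \<in> {0,1}"
  shows "qelt n 0 t 0 \<otimes>\<^bsub>Z2Q n\<^esub> qelt n e a b = qelt n e (t + a) b"
  using assms by (auto simp: qelt_mult)

lemma qelt_square: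
  assumes "n > 0" "e \<in> {0,1}" "b \<in> {0,1}"
  shows "qelt n e a b \<otimes>\<^bsub>Z2Q n\<^esub> qelt n e a b = qelt n 0 ((1 - int b) * 2 * a + int b * int n) 0"
  using assms by (auto simp: qelt_mult)

section \<open>Subgroups of the Klein four-group\<close>

definition klein_subgroups :: "(int \<times> nat) set set" where
  "klein_subgroups = {{(0,0)}, {(0,0), (1,0)}, {(0,0), (0,1)}, {(0,0), (1,1)}, {0,1} \<times> {0,1}}"

lemma klein_subgroups_iff:
  "L \<in> klein_subgroups \<longleftrightarrow> L \<subseteq> {0,1} \<times> {0,1} \<and> (0,0) \<in> L \<and>
     (\<forall>(e,b)\<in>L. \<forall>(e',b')\<in>L. ((e + e') mod 2, (b + b') mod 2) \<in> L)"
proof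
  assume "L \<in> klein_subgroups"
  then show "L \<subseteq> {0,1} \<times> {0,1} \<and> (0,0) \<in> L \<and>
      (\<forall>(e,b)\<in>L. \<forall>(e',b')\<in>L. ((e + e') mod 2, (b + b') mod 2) \<in> L)"
    by (auto simp: klein_subgroups_def)
next
  assume L: "L \<subseteq> {0,1} \<times> {0,1} \<and> (0,0) \<in> L \<and>
      (\<forall>(e,b)\<in>L. \<forall>(e',b')\<in>L. ((e + e') mod 2, (b + b') mod 2) \<in> L)"
  then have L_eq: "L = {x. x = (0,0) \<or> (x = (1,0) \<and> (1,0) \<in> L) \<or> (x = (0,1) \<and> (0,1) \<in> L)
      \<or> (x = (1,1) \<and> (1,1) \<in> L)}"
    by blast
  have closed: "((e + e') mod 2, (b + b') mod 2) \<in> L" if "(e,b) \<in> L" "(e',b') \<in> L" for e e' b b'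
    using L that by blast
  have "(1,1) \<in> L" if "(1,0) \<in> L" "(0,1) \<in> L"
    using closed[OF that] by simp
  moreover have "(0,1) \<in> L" if "(1,0) \<in> L" "(1,1) \<in> L"
    using closed[OF that] by simp
  moreover have "(1,0) \<in> L" if "(0,1) \<in> L" "(1,1) \<in> L"
    using closed[OF that] by simp
  ultimately consider
      "(1,0) \<notin> L" "(0,1) \<notin> L" "(1,1) \<notin> L" | "(1,0) \<in> L" "(0,1) \<notin> L" "(1,1) \<notin> L"
    | "(1,0) \<notin> L" "(0,1) \<in> L" "(1,1) \<notin> L" | "(1,0) \<notin> L" "(0,1) \<notin> L" "(1,1) \<in> L"
    | "(1,0) \<in> L" "(0,1) \<in> L" "(1,1) \<in> L"
    by blast
  then show "L \<in> klein_subgroups"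
  proof cases
    case 1
    then have "L = {(0,0)}" by (subst L_eq) auto
    then show ?thesis by (simp add: klein_subgroups_def)
  next
    case 2
    then have "L = {(0,0), (1,0)}" by (subst L_eq) auto
    then show ?thesis by (simp add: klein_subgroups_def)
  next
    case 3
    then have "L = {(0,0), (0,1)}" by (subst L_eq) auto
    then show ?thesis by (simp add: klein_subgroups_def)
  next
    case 4
    then have "L = {(0,0), (1,1)}" by (subst L_eq) auto
    then show ?thesis by (simp add: klein_subgroups_def)
  next
    case 5
    then have "L = {0,1} \<times> {0,1}" by (subst L_eq) auto
    then show ?thesis by (simp add: klein_subgroups_def)
  qed
qed

lemma klein_subgroup_subset: "L \<in> klein_subgroups \<Longrightarrow> L \<subseteq> {0,1} \<times> {0,1}"
  and klein_subgroup_zero: "L \<in> klein_subgroups \<Longrightarrow> (0,0) \<in> L"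
  and klein_subgroup_closed: "L \<in> klein_subgroups \<Longrightarrow> (e, b) \<in> L \<Longrightarrow> (e', b') \<in> L \<Longrightarrow>
    ((e + e') mod 2, (b + b') mod 2) \<in> L"
  unfolding klein_subgroups_iff by blast+

definition param_subgroup :: "nat \<Rightarrow> nat \<times> (int \<times> nat) set \<times> nat \<times> nat \<Rightarrow> (int \<times> nat \<times> nat) set"
  where "param_subgroup n =
    (\<lambda>(d, L, r, s). {qelt n e a b | e a b. (e, b) \<in> L \<and> int d dvd a - (e * int r + int b * int s)})"

text \<open>The offsets are normalised to \<open>0\<close> when the corresponding coset is missing from \<open>L\<close>,
  which makes the parametrisation injective.\<close>

definition subgroup_params :: "nat \<Rightarrow> (nat \<times> (int \<times> nat) set \<times> nat \<times> nat) set" where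
  "subgroup_params n = {(d, L, r, s). d dvd 2 * n \<and> L \<in> klein_subgroups \<and> r < d \<and> s < d \<and> d dvd 2 * r
     \<and> ((1,0) \<notin> L \<longrightarrow> r = 0) \<and> ((0,1) \<notin> L \<and> (1,1) \<notin> L \<longrightarrow> s = 0)
     \<and> ((0,1) \<in> L \<or> (1,1) \<in> L \<longrightarrow> d dvd n)}"

lemma mem_param_subgroup:
  "x \<in> param_subgroup n (d, L, r, s) \<longleftrightarrow>
    (\<exists>e a b. x = qelt n e a b \<and> (e, b) \<in> L \<and> int d dvd a - (e * int r + int b * int s))"
  by (simp add: param_subgroup_def)

lemma qelt_in_param_subgroup_iff:
  assumes "n > 0" "d dvd 2 * n"
  shows "qelt n e a b \<in> param_subgroup n (d, L, r, s) \<longleftrightarrow>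
    (e, b) \<in> L \<and> int d dvd a - (e * int r + int b * int s)"
proof
  assume "qelt n e a b \<in> param_subgroup n (d, L, r, s)"
  then obtain e' a' b' where eq: "qelt n e a b = qelt n e' a' b'"
    and "(e', b') \<in> L" and a': "int d dvd a' - (e' * int r + int b' * int s)"
    unfolding mem_param_subgroup by blast
  then have "e' = e" "b' = b" and "a mod (2 * int n) = a' mod (2 * int n)"
    using assms(1) by (simp_all add: qelt_eq_iff)
  have "int d dvd a - a'"
  proof (rule dvd_trans)
    show "int d dvd 2 * int n" using assms(2) int_dvd_int_iff[of d "2 * n"] by simp
    show "2 * int n dvd a - a'"
      using \<open>a mod (2 * int n) = a' mod (2 * int n)\<close> by (simp add: mod_eq_dvd_iff)
  qed
  from dvd_add[OF this a']
  show "(e, b) \<in> L \<and> int d dvd a - (e * int r + int b * int s)"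
    using \<open>(e', b') \<in> L\<close> \<open>e' = e\<close> \<open>b' = b\<close> by (simp add: algebra_simps)
next
  assume "(e, b) \<in> L \<and> int d dvd a - (e * int r + int b * int s)"
  then show "qelt n e a b \<in> param_subgroup n (d, L, r, s)"
    unfolding mem_param_subgroup by blast
qed

lemma subgroup_param_subgroup:
  assumes "n > 0" "p \<in> subgroup_params n"
  shows "subgroup (param_subgroup n p) (Z2Q n)"
proof -
  obtain d L r s where p: "p = (d, L, r, s)" by (cases p)
  have d: "d dvd 2 * n" "int d dvd 2 * int r" and L: "L \<in> klein_subgroups"
    and dvd_n: "(0,1) \<in> L \<or> (1,1) \<in> L \<Longrightarrow> int d dvd int n"
    using assms(2) int_dvd_int_iff[of d "2 * r"] unfolding p subgroup_params_def by auto
  note mem = qelt_in_param_subgroup_iff[OF assms(1) d(1)]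
  have L01: "e \<in> {0,1}" "b \<in> {0,1}" if "(e, b) \<in> L" for e b
    using klein_subgroup_subset[OF L] that by auto
  have dvd_bn: "int d dvd int b * int b' * int n" if "(e, b) \<in> L" "(e', b') \<in> L" for e b e' b'
  proof (cases "b = 1 \<and> b' = 1")
    case True
    then have "(0,1) \<in> L \<or> (1,1) \<in> L" using that L01 by fastforce
    then show ?thesis using dvd_n by simp
  next
    case False
    then have "b = 0 \<or> b' = 0" using L01 that by fastforce
    then show ?thesis by auto
  qed
  have mod2_int: "(e + e') mod 2 = e + e' - 2 * e * e'" if "e \<in> {0,1}" "e' \<in> {0,1}" for e e' :: int
    using that by auto
  have mod2_nat: "int ((b + b') mod 2) = int b + int b' - 2 * int b * int b'" if "b \<in> {0,1}" "b' \<in> {0,1}" for b b'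
    using that by auto
  show ?thesis
  proof (rule subgroup.intro)
    show "param_subgroup n p \<subseteq> carrier (Z2Q n)"
      using L01 assms(1) by (auto simp: p mem_param_subgroup qelt_in_carrier_iff)
    show "\<one>\<^bsub>Z2Q n\<^esub> \<in> param_subgroup n p"
      using klein_subgroup_zero[OF L] by (simp add: p one_Z2Q mem)
  next
    fix x y assume "x \<in> param_subgroup n p" "y \<in> param_subgroup n p"
    then obtain e a b e' c b' where x: "x = qelt n e a b" "(e, b) \<in> L"
        and u: "int d dvd a - (e * int r + int b * int s)"
        and y: "y = qelt n e' c b'" "(e', b') \<in> L"
        and v: "int d dvd c - (e' * int r + int b' * int s)"
      unfolding p mem_param_subgroup by blast
    have "a + (1 - 2 * int b) * c + int (b * b') * int n
        - ((e + e') mod 2 * int r + int ((b + b') mod 2) * int s)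
      = (a - (e * int r + int b * int s)) + (1 - 2 * int b) * (c - (e' * int r + int b' * int s))
        + (e * e' - int b * e') * (2 * int r) + int b * int b' * int n"
      using L01[OF x(2)] L01[OF y(2)] by (simp add: mod2_int mod2_nat algebra_simps)
    also have "int d dvd \<dots>"
      using u v d(2) dvd_bn[OF x(2) y(2)] by simp
    finally show "x \<otimes>\<^bsub>Z2Q n\<^esub> y \<in> param_subgroup n p"
      using L01[OF x(2)] L01[OF y(2)] klein_subgroup_closed[OF L x(2) y(2)]
      by (simp add: x(1) y(1) p qelt_mult assms(1) mem)
  next
    fix x assume "x \<in> param_subgroup n p"
    then obtain e a b where x: "x = qelt n e a b" "(e, b) \<in> L"
        and u: "int d dvd a - (e * int r + int b * int s)"
      unfolding p mem_param_subgroup by blast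
    have "(2 * int b - 1) * a + int b * int n - (e * int r + int b * int s)
      = (2 * int b - 1) * (a - (e * int r + int b * int s)) + (int b - 1) * e * (2 * int r)
        + int b * int b * int n"
      using L01[OF x(2)] by (auto simp: algebra_simps)
    also have "int d dvd \<dots>"
      using u d(2) dvd_bn[OF x(2) x(2)] by simp
    finally show "inv\<^bsub>Z2Q n\<^esub> x \<in> param_subgroup n p"
      using L01[OF x(2)] x(2) by (simp add: x(1) p qelt_inv assms(1) mem)
  qed
qed

section \<open>Every subgroup is parametrised\<close>

locale Z2Q_subgroup =
  fixes n :: nat and H :: "(int \<times> nat \<times> nat) set"
  assumes n_pos: "n > 0" and subgroup: "subgroup H (Z2Q n)"
begin

lemma qelt_in_H_components:
  assumes "qelt n e a b \<in> H"
  shows "e \<in> {0,1}" "b \<in> {0,1}"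
  using subgroup.subset[OF subgroup] assms qelt_in_carrier_iff[OF n_pos] by auto

lemma H_qeltE:
  assumes "x \<in> H"
  obtains e a b where "x = qelt n e a b" "e \<in> {0,1}" "b \<in> {0,1}"
  using subgroup.subset[OF subgroup] assms carrier_Z2Q[OF n_pos] by blast

lemma one_in_H: "qelt n 0 0 0 \<in> H"
  using subgroup.one_closed[OF subgroup] by (simp add: one_Z2Q)

lemmas mult_in_H = subgroup.m_closed[OF subgroup]

lemma qelt_mult_inv_in_H:
  assumes "qelt n e a b \<in> H" "qelt n e c b \<in> H"
  shows "qelt n 0 (a - c) 0 \<in> H"
proof -
  have "qelt n e a b \<otimes>\<^bsub>Z2Q n\<^esub> inv\<^bsub>Z2Q n\<^esub> qelt n e c b \<in> H"
    using assms subgroup.m_closed[OF subgroup] subgroup.m_inv_closed[OF subgroup] by blast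
  then show ?thesis
    using qelt_in_H_components[OF assms(1)] by (simp add: qelt_mult_inv n_pos)
qed

lemma cyclic_index:
  obtains d where "d dvd 2 * n" "\<And>a. qelt n 0 a 0 \<in> H \<longleftrightarrow> int d dvd a"
proof -
  define I where "I = {a. qelt n 0 a 0 \<in> H}"
  have "I = {a. Gcd I dvd a}"
    using one_in_H qelt_mult_inv_in_H unfolding I_def by (intro int_set_closed_diff_eq_multiples) auto
  moreover have "2 * int n \<in> I"
    using one_in_H n_pos by (simp add: I_def qelt_def)
  ultimately have "Gcd I dvd 2 * int n" by blast
  define d where "d = nat (Gcd I)"
  have d: "int d = Gcd I" by (simp add: d_def)
  show thesis
  proof (rule that)
    show "d dvd 2 * n"
      using \<open>Gcd I dvd 2 * int n\<close> by (simp flip: d int_dvd_int_iff)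
    show "qelt n 0 a 0 \<in> H \<longleftrightarrow> int d dvd a" for a
      using \<open>I = {a. Gcd I dvd a}\<close> by (auto simp: d I_def)
  qed
qed

definition klein_image :: "(int \<times> nat) set" where
  "klein_image = {(e, b). \<exists>a. qelt n e a b \<in> H}"

lemma klein_image_in_klein_subgroups: "klein_image \<in> klein_subgroups"
  unfolding klein_subgroups_iff
proof (intro conjI)
  show "klein_image \<subseteq> {0,1} \<times> {0,1}"
    unfolding klein_image_def using qelt_in_H_components by blast
  show "(0,0) \<in> klein_image"
    using one_in_H by (auto simp: klein_image_def)
  show "\<forall>(e, b)\<in>klein_image. \<forall>(e', b')\<in>klein_image. ((e + e') mod 2, (b + b') mod 2) \<in> klein_image"
  proof (clarsimp simp: klein_image_def)
    fix e b e' b' a c assume "qelt n e a b \<in> H" "qelt n e' c b' \<in> H"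
    with mult_in_H[OF this] show "\<exists>a. qelt n ((e + e') mod 2) a ((b + b') mod 2) \<in> H"
      using qelt_in_H_components by (auto simp: qelt_mult n_pos)
  qed
qed

lemma klein_image_components:
  assumes "(e, b) \<in> klein_image"
  shows "e \<in> {0,1}" "b \<in> {0,1}"
  using klein_subgroup_subset[OF klein_image_in_klein_subgroups] assms by auto

end

locale Z2Q_subgroup_cyclic_index = Z2Q_subgroup +
  fixes d :: nat
  assumes d_dvd: "d dvd 2 * n" and cyclic_iff: "\<And>a. qelt n 0 a 0 \<in> H \<longleftrightarrow> int d dvd a"
begin

lemma d_pos: "d > 0"
  using d_dvd n_pos by (cases "d = 0") auto

lemma fibre_iff:
  assumes f: "qelt n e f b \<in> H"
  shows "qelt n e a b \<in> H \<longleftrightarrow> int d dvd a - f"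
proof
  assume "qelt n e a b \<in> H"
  from qelt_mult_inv_in_H[OF this f] show "int d dvd a - f"
    by (simp add: cyclic_iff)
next
  assume "int d dvd a - f"
  then have "qelt n 0 (a - f) 0 \<in> H" by (simp add: cyclic_iff)
  from mult_in_H[OF this f] show "qelt n e a b \<in> H"
    using qelt_in_H_components[OF f] by (simp add: qelt_cyclic_mult n_pos)
qed

lemma klein_image_representative:
  assumes "(e, b) \<in> klein_image"
  obtains t where "t < d" "qelt n e (int t) b \<in> H"
proof -
  obtain f where f: "qelt n e f b \<in> H"
    using assms by (auto simp: klein_image_def)
  define t where "t = nat (f mod int d)"
  have t: "int t = f mod int d" using d_pos by (simp add: t_def)
  show thesis
  proof (rule that)
    have "f mod int d < int d" using d_pos by simp
    then show "t < d" using t by linarith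
    have "int d dvd f mod int d - f" by (simp add: mod_eq_dvd_iff[symmetric])
    then show "qelt n e (int t) b \<in> H" by (simp add: fibre_iff[OF f] t)
  qed
qed

lemma eq_param_subgroup_if_representatives:
  assumes representatives: "\<And>e b. (e, b) \<in> klein_image \<Longrightarrow> qelt n e (e * int r + int b * int s) b \<in> H"
  shows "H = param_subgroup n (d, klein_image, r, s)"
proof (intro equalityI subsetI)
  fix x assume "x \<in> H"
  then obtain e a b where x: "x = qelt n e a b" by (rule H_qeltE)
  with \<open>x \<in> H\<close> have "(e, b) \<in> klein_image" by (auto simp: klein_image_def)
  with \<open>x \<in> H\<close> show "x \<in> param_subgroup n (d, klein_image, r, s)"
    using fibre_iff[OF representatives] by (simp add: x qelt_in_param_subgroup_iff[OF n_pos d_dvd])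
next
  fix x assume "x \<in> param_subgroup n (d, klein_image, r, s)"
  then obtain e a b where x: "x = qelt n e a b" "(e, b) \<in> klein_image"
    and "int d dvd a - (e * int r + int b * int s)"
    unfolding mem_param_subgroup by blast
  then show "x \<in> H" using fibre_iff[OF representatives] by simp
qed

lemma x_offset_exists:
  obtains r where "r < d" "(1,0) \<in> klein_image \<Longrightarrow> qelt n 1 (int r) 0 \<in> H"
    "(1,0) \<notin> klein_image \<Longrightarrow> r = 0"
proof (cases "(1,0) \<in> klein_image")
  case True
  then show thesis using that klein_image_representative by blast
next
  case False
  then show thesis using that[of 0] d_pos by blast
qed

lemma y_offset_exists:
  assumes r: "(1,0) \<in> klein_image \<Longrightarrow> qelt n 1 (int r) 0 \<in> H" "(1,0) \<notin> klein_image \<Longrightarrow> r = 0"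
  obtains s where "s < d" "\<And>e. (e, 1) \<in> klein_image \<Longrightarrow> qelt n e (e * int r + int s) 1 \<in> H"
    "(0,1) \<notin> klein_image \<and> (1,1) \<notin> klein_image \<Longrightarrow> s = 0"
proof -
  note closed = klein_subgroup_closed[OF klein_image_in_klein_subgroups]
  consider "(0,1) \<in> klein_image" | "(0,1) \<notin> klein_image" "(1,1) \<in> klein_image"
    | "(0,1) \<notin> klein_image" "(1,1) \<notin> klein_image" by blast
  then show thesis
  proof cases
    case 1
    then obtain t where t: "t < d" "qelt n 0 (int t) 1 \<in> H" by (rule klein_image_representative)
    show thesis
    proof (rule that[of t])
      fix e assume e: "(e, 1) \<in> klein_image"
      show "qelt n e (e * int r + int t) 1 \<in> H"
      proof (cases "e = 0")
        case False
        then have "e = 1" using klein_image_components(1)[OF e] by simp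
        then have "(1,0) \<in> klein_image" using closed[OF e 1] by simp
        from mult_in_H[OF r(1)[OF this] t(2)] show ?thesis
          using \<open>e = 1\<close> by (simp add: qelt_mult n_pos)
      qed (use t in simp)
    qed (use t 1 in simp_all)
  next
    case 2
    obtain t where t: "t < d" "qelt n 1 (int t) 1 \<in> H" using klein_image_representative 2(2) .
    have "(1,0) \<notin> klein_image" using closed[of 1 0 1 1] 2 by auto
    then have "r = 0" by (rule r(2))
    show thesis
    proof (rule that[of t])
      fix e assume e: "(e, 1) \<in> klein_image"
      then have "e = 1" using klein_image_components(1)[OF e] 2 by auto
      then show "qelt n e (e * int r + int t) 1 \<in> H" using t \<open>r = 0\<close> by simp
    qed (use t 2 in simp_all)
  next
    case 3
    show thesis
    proof (rule that[of 0])
      fix e assume e: "(e, 1) \<in> klein_image"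
      then show "qelt n e (e * int r + int 0) 1 \<in> H" using klein_image_components(1)[OF e] 3 by auto
    qed (use d_pos in simp_all)
  qed
qed

lemma dvd_twice_x_offset:
  assumes "qelt n 1 (int r) 0 \<in> H"
  shows "d dvd 2 * r"
proof -
  from mult_in_H[OF assms assms] have "int d dvd 2 * int r"
    by (simp add: qelt_square n_pos cyclic_iff)
  then show ?thesis using int_dvd_int_iff[of d "2 * r"] by simp
qed

lemma dvd_if_y_coset:
  assumes "qelt n e a 1 \<in> H"
  shows "d dvd n"
proof -
  from mult_in_H[OF assms assms] have "int d dvd int n"
    using qelt_in_H_components[OF assms] by (simp add: qelt_square n_pos cyclic_iff)
  then show ?thesis by simp
qed

lemma param_subgroup_exists:
  obtains r s where "(d, klein_image, r, s) \<in> subgroup_params n"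
    and "H = param_subgroup n (d, klein_image, r, s)"
proof -
  obtain r where r: "r < d" "(1,0) \<in> klein_image \<Longrightarrow> qelt n 1 (int r) 0 \<in> H"
    "(1,0) \<notin> klein_image \<Longrightarrow> r = 0"
    using x_offset_exists by blast
  obtain s where s: "s < d" "\<And>e. (e, 1) \<in> klein_image \<Longrightarrow> qelt n e (e * int r + int s) 1 \<in> H"
    "(0,1) \<notin> klein_image \<and> (1,1) \<notin> klein_image \<Longrightarrow> s = 0"
    using y_offset_exists[OF r(2,3)] by blast
  have "qelt n e (e * int r + int b * int s) b \<in> H" if "(e, b) \<in> klein_image" for e b
    using klein_image_components[OF that] that one_in_H r(2) s(2) by (cases "b = 0") auto
  then have "H = param_subgroup n (d, klein_image, r, s)"
    by (rule eq_param_subgroup_if_representatives)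
  moreover have "d dvd 2 * r"
    using r(2,3) dvd_twice_x_offset by (cases "(1,0) \<in> klein_image") auto
  moreover have "d dvd n" if "(0,1) \<in> klein_image \<or> (1,1) \<in> klein_image"
    using that s(2) dvd_if_y_coset by blast
  ultimately show thesis
    using that r(1,3) s(1,3) klein_image_in_klein_subgroups d_dvd by (auto simp: subgroup_params_def)
qed

end

context Z2Q_subgroup
begin

lemma in_range_param_subgroup: "H \<in> param_subgroup n ` subgroup_params n"
proof -
  obtain d where "d dvd 2 * n" "\<And>a. qelt n 0 a 0 \<in> H \<longleftrightarrow> int d dvd a"
    using cyclic_index by blast
  then interpret Z2Q_subgroup_cyclic_index n H d
    by unfold_locales
  obtain r s where "(d, klein_image, r, s) \<in> subgroup_params n"
    "H = param_subgroup n (d, klein_image, r, s)"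
    using param_subgroup_exists by blast
  then show ?thesis by blast
qed

end

section \<open>The parametrisation is bijective\<close>

lemma klein_image_param_subgroup:
  assumes "n > 0" "d dvd 2 * n"
  shows "{(e, b). \<exists>a. qelt n e a b \<in> param_subgroup n (d, L, r, s)} = L"
proof (intro equalityI subsetI)
  fix x assume "x \<in> L"
  moreover obtain e b where "x = (e, b)" by (cases x)
  ultimately have "qelt n e (e * int r + int b * int s) b \<in> param_subgroup n (d, L, r, s)"
    by (simp add: qelt_in_param_subgroup_iff[OF assms])
  then show "x \<in> {(e, b). \<exists>a. qelt n e a b \<in> param_subgroup n (d, L, r, s)}"
    using \<open>x = (e, b)\<close> by blast
qed (auto simp: qelt_in_param_subgroup_iff[OF assms])

lemma inj_on_param_subgroup:
  assumes n: "n > 0"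
  shows "inj_on (param_subgroup n) (subgroup_params n)"
proof (rule inj_onI)
  fix p p' assume "p \<in> subgroup_params n" "p' \<in> subgroup_params n"
    and eq: "param_subgroup n p = param_subgroup n p'"
  then obtain d L r s d' L' r' s' where p: "p = (d, L, r, s)" "p' = (d', L', r', s')"
    and d: "d dvd 2 * n" "d' dvd 2 * n" and L: "L \<in> klein_subgroups"
    and rs: "r < d" "s < d" "r' < d'" "s' < d'"
    and r0: "(1,0) \<notin> L \<Longrightarrow> r = 0" "(1,0) \<notin> L' \<Longrightarrow> r' = 0"
    and s0: "(0,1) \<notin> L \<and> (1,1) \<notin> L \<Longrightarrow> s = 0" "(0,1) \<notin> L' \<and> (1,1) \<notin> L' \<Longrightarrow> s' = 0"
    unfolding subgroup_params_def by blast
  note mem = qelt_in_param_subgroup_iff[OF n d(1)] qelt_in_param_subgroup_iff[OF n d(2)]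
  have "L' = L"
    using klein_image_param_subgroup[OF n d(1), of L r s] klein_image_param_subgroup[OF n d(2), of L' r' s']
      eq p by simp
  have same: "x \<in> param_subgroup n (d, L, r, s) \<longleftrightarrow> x \<in> param_subgroup n (d', L, r', s')" for x
    using eq p \<open>L' = L\<close> by simp
  have "int d dvd a \<longleftrightarrow> int d' dvd a" for a
    using same[of "qelt n 0 a 0"] klein_subgroup_zero[OF L] by (simp add: mem)
  then have "d = d'"
    by (metis dvd_antisym dvd_refl int_dvd_int_iff)
  have offsets: "int d dvd (e * int r + int b * int s) - (e * int r' + int b * int s')"
    if "(e, b) \<in> L" for e b
    using same[of "qelt n e (e * int r + int b * int s) b"] that \<open>d = d'\<close> by (simp add: mem)
  have "r = r'"
  proof (cases "(1,0) \<in> L")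
    case True
    from offsets[OF this] show ?thesis
      using rs \<open>d = d'\<close> by (intro eq_if_int_dvd_diff[of r d r']) simp_all
  qed (use r0 \<open>L' = L\<close> in simp)
  moreover have "s = s'"
  proof (cases "(0,1) \<in> L \<or> (1,1) \<in> L")
    case True
    then obtain e where "(e, 1) \<in> L" by blast
    from offsets[OF this] show ?thesis
      using rs \<open>d = d'\<close> \<open>r = r'\<close> by (intro eq_if_int_dvd_diff[of s d s']) simp_all
  qed (use s0 \<open>L' = L\<close> in simp)
  ultimately show "p = p'" using p \<open>L' = L\<close> \<open>d = d'\<close> by simp
qed

lemma subgroups_Z2Q_eq:
  assumes "n > 0"
  shows "{H. subgroup H (Z2Q n)} = param_subgroup n ` subgroup_params n"
proof (intro equalityI subsetI)
  fix H assume "H \<in> {H. subgroup H (Z2Q n)}"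
  then interpret Z2Q_subgroup n H using assms by (simp add: Z2Q_subgroup_def)
  show "H \<in> param_subgroup n ` subgroup_params n" by (rule in_range_param_subgroup)
qed (use subgroup_param_subgroup[OF assms] in auto)

section \<open>Counting subgroups\<close>

definition two_torsion :: "nat \<Rightarrow> nat set" where
  "two_torsion d = {r. r < d \<and> d dvd 2 * r}"

definition offset_params :: "nat \<Rightarrow> nat \<Rightarrow> (int \<times> nat) set \<Rightarrow> (nat \<times> nat) set" where
  "offset_params n d L = {(r, s). r < d \<and> s < d \<and> d dvd 2 * r \<and> ((1,0) \<notin> L \<longrightarrow> r = 0)
     \<and> ((0,1) \<notin> L \<and> (1,1) \<notin> L \<longrightarrow> s = 0) \<and> ((0,1) \<in> L \<or> (1,1) \<in> L \<longrightarrow> d dvd n)}"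

lemma subgroup_params_eq_Sigma:
  "subgroup_params n = (SIGMA d:{d. d dvd 2 * n}. SIGMA L:klein_subgroups. offset_params n d L)"
  by (auto simp: subgroup_params_def offset_params_def)

lemma sum_klein_subgroups:
  "(\<Sum>L\<in>klein_subgroups. f L) =
     f {(0,0)} + f {(0,0), (1,0)} + f {(0,0), (0,1)} + f {(0,0), (1,1)} + f ({0,1} \<times> {0,1})"
proof -
  have set_neq_if_mem: "A \<noteq> B" if "x \<in> B" "x \<notin> A" for x :: "int \<times> nat" and A B
    using that by blast
  have "{(0,0)} \<noteq> {(0::int,0::nat), (1,0)}" "{(0,0)} \<noteq> {(0::int,0::nat), (0,1)}"
    "{(0,0)} \<noteq> {(0::int,0::nat), (1,1)}" "{(0,0)} \<noteq> ({0::int,1} \<times> {0::nat,1})"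
    by (rule set_neq_if_mem[of "(1,0)"] set_neq_if_mem[of "(0,1)"] set_neq_if_mem[of "(1,1)"]; simp)+
  moreover have "{(0::int,0::nat), (1,0)} \<noteq> {(0,0), (0,1)}" "{(0::int,0::nat), (1,0)} \<noteq> {(0,0), (1,1)}"
    "{(0::int,0::nat), (1,0)} \<noteq> {0,1} \<times> {0,1}" "{(0::int,0::nat), (0,1)} \<noteq> {(0,0), (1,1)}"
    "{(0::int,0::nat), (0,1)} \<noteq> {0,1} \<times> {0,1}" "{(0::int,0::nat), (1,1)} \<noteq> {0,1} \<times> {0,1}"
    by (rule set_neq_if_mem[of "(0,1)"] set_neq_if_mem[of "(1,1)"] set_neq_if_mem[of "(1,0)"]; simp)+
  ultimately show ?thesis
    by (simp only: klein_subgroups_def sum.insert finite.emptyI finite.insertI insert_iff empty_iff sum.empty simp_thms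
        add_0_right add.assoc)
qed

lemma sum_card_offset_params:
  assumes "d > 0"
  shows "(\<Sum>L\<in>klein_subgroups. card (offset_params n d L)) =
    1 + card (two_torsion d) + (if d dvd n then (2 + card (two_torsion d)) * d else 0)"
proof -
  have "offset_params n d {(0,0)} = {(0, 0)}"
    using assms by (auto simp: offset_params_def)
  moreover have "offset_params n d {(0,0), (1,0)} = two_torsion d \<times> {0}"
    using assms by (auto simp: offset_params_def two_torsion_def)
  moreover have "offset_params n d {(0,0), (0,1)} = (if d dvd n then {0} \<times> {..<d} else {})"
    using assms by (auto simp: offset_params_def)
  moreover have "offset_params n d {(0,0), (1,1)} = (if d dvd n then {0} \<times> {..<d} else {})"
    using assms by (auto simp: offset_params_def)
  moreover have "offset_params n d ({0,1} \<times> {0,1}) = (if d dvd n then two_torsion d \<times> {..<d} else {})"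
    by (auto simp: offset_params_def two_torsion_def)
  ultimately show ?thesis
    by (simp add: sum_klein_subgroups card_cartesian_product)
qed

theorem card_subgroups_Z2Q:
  assumes "n > 0"
  shows "card {H. subgroup H (Z2Q n)} =
    (\<Sum>d | d dvd 2 * n. 1 + card (two_torsion d) + (if d dvd n then (2 + card (two_torsion d)) * d else 0))"
proof -
  have fin: "finite (offset_params n d L)" for d L
    by (rule finite_subset[of _ "{..<d} \<times> {..<d}"]) (auto simp: offset_params_def)
  have "finite {d. d dvd 2 * n}" using assms by simp
  then have "card (subgroup_params n) = (\<Sum>d | d dvd 2 * n. \<Sum>L\<in>klein_subgroups. card (offset_params n d L))"
    unfolding subgroup_params_eq_Sigma using fin
    by (simp add: klein_subgroups_def)
  also have "\<dots> = (\<Sum>d | d dvd 2 * n.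
      1 + card (two_torsion d) + (if d dvd n then (2 + card (two_torsion d)) * d else 0))"
    using assms by (intro sum.cong refl sum_card_offset_params) (auto intro: Nat.gr0I)
  finally show ?thesis
    using card_image[OF inj_on_param_subgroup[OF assms]] subgroups_Z2Q_eq[OF assms] by simp
qed

lemma divisors_pow2: "{d. d dvd (2::nat) ^ j} = (\<lambda>k. 2 ^ k) ` {..j}"
  using divides_primepow_nat[OF two_is_prime_nat] by auto

lemma inj_on_pow2: "inj_on (\<lambda>k. (2::nat) ^ k) A"
  by (rule inj_onI) simp

lemma card_two_torsion_pow2: "card (two_torsion (2 ^ k)) = (if k = 0 then 1 else 2)"
proof (cases k)
  case 0
  then have "two_torsion (2 ^ k) = {0}" by (auto simp: two_torsion_def)
  then show ?thesis using 0 by simp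
next
  case (Suc j)
  have "two_torsion (2 ^ k) = {0, 2 ^ j}"
  proof (intro equalityI subsetI)
    fix r assume "r \<in> two_torsion (2 ^ k)"
    then have "r < 2 * 2 ^ j" "2 ^ j dvd r" using Suc by (auto simp: two_torsion_def)
    then obtain q where "r = 2 ^ j * q" "q < 2" by auto
    then show "r \<in> {0, 2 ^ j}" by (cases q) auto
  qed (auto simp: two_torsion_def Suc)
  then show ?thesis using Suc by simp
qed

lemma card_subgroups_Z2Q_pow2: "card {H. subgroup H (Z2Q (2 ^ j))} = 8 * 2 ^ j + 3 * j"
proof -
  define t :: "nat \<Rightarrow> nat" where "t k = (if k = 0 then 1 else 2)" for k
  have "card {H. subgroup H (Z2Q (2 ^ j))} =
      (\<Sum>k\<le>Suc j. 1 + card (two_torsion (2 ^ k))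
        + (if 2 ^ k dvd (2::nat) ^ j then (2 + card (two_torsion (2 ^ k))) * 2 ^ k else 0))"
    using card_subgroups_Z2Q[of "2 ^ j"]
    by (simp add: divisors_pow2[of "Suc j", simplified] sum.reindex inj_on_pow2)
  also have "\<dots> = (\<Sum>k\<le>Suc j. (1 + t k) + (if k \<le> j then (2 + t k) * 2 ^ k else 0))"
    by (simp add: dvd_power_iff_le card_two_torsion_pow2 t_def)
  also have "\<dots> = (\<Sum>k\<le>Suc j. 1 + t k) + (\<Sum>k\<le>Suc j. if k \<le> j then (2 + t k) * 2 ^ k else 0)"
    by (rule sum.distrib)
  also have "(\<Sum>k\<le>Suc j. if k \<le> j then (2 + t k) * 2 ^ k else 0) = (\<Sum>k\<le>j. (2 + t k) * 2 ^ k)"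
    by simp
  also have "(\<Sum>k\<le>Suc j. 1 + t k) = 3 * j + 5"
    by (induction j) (simp_all add: t_def)
  finally have "card {H. subgroup H (Z2Q (2 ^ j))} = 3 * j + 5 + (\<Sum>k\<le>j. (2 + t k) * 2 ^ k)" .
  moreover have "(\<Sum>k\<le>j. (2 + t k) * 2 ^ k) + 5 = 8 * (2::nat) ^ j"
    by (induction j) (simp_all add: t_def)
  ultimately show ?thesis by linarith
qed

lemma num_divisors_pow2: "num_divisors (2 ^ j) = j + 1"
  unfolding num_divisors_def divisors_pow2 by (simp add: card_image inj_on_pow2)

lemma sum_divisors_pow2: "sum_divisors (2 ^ j) + 1 = 2 ^ (j + 1)"
proof -
  have "sum_divisors (2 ^ j) = (\<Sum>k\<le>j. 2 ^ k)"
    unfolding sum_divisors_def divisors_pow2 by (simp add: sum.reindex inj_on_pow2)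
  moreover have "(\<Sum>k\<le>j. (2::nat) ^ k) + 1 = 2 ^ (j + 1)"
    by (induction j) simp_all
  ultimately show ?thesis by simp
qed

theorem corollary2p4:
  fixes m n' :: nat
  assumes "m \<ge> 2" and "n' = 2 ^ (m - 1)"
  shows "int (card {H. subgroup H (integer_mod_group 2 \<times>\<times> quaternion_group n')})
           = 5 * int (sum_divisors n') + 3 * int (num_divisors n') - 2 * int n' + 2"
proof -
  define j where "j = m - 1"
  define N :: nat where "N = 2 ^ j"
  have "card {H. subgroup H (integer_mod_group 2 \<times>\<times> quaternion_group n')} = 8 * N + 3 * j"
    using card_subgroups_Z2Q_pow2[of j] assms(2) by (simp add: Z2Q_def j_def N_def)
  moreover have "sum_divisors n' + 1 = 2 * N"
    using sum_divisors_pow2[of j] assms(2) by (simp add: j_def N_def)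
  moreover have "num_divisors n' = j + 1" "n' = N"
    using num_divisors_pow2[of j] assms(2) by (simp_all add: j_def N_def)
  ultimately show ?thesis by linarith
qed

end
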